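(* Let $n \in \mathbb{N}$, let $S_0 \subset \mathbb{R}^n$ be closed and connected, and let $S$ be a connected component of $\mathbb{R}^n \setminus S_0$. Then: (i) $\partial S$ is connected; (ii) $\partial S \subset S_0$; (iii) for every family $\mathcal{U}$ of open connected subsets of $\mathbb{R}^n$ such that $\mathbb{R}^n \setminus S \subset \bigcup \mathcal{U}$ and $U \cap (\mathbb{R}^n \setminus S) \ne \emptyset$ for all $U \in \mathcal{U}$, the set $S \cap \bigcup \mathcal{U}$ is open and connected.
   Context: $\partial S$ denotes the topological boundary of $S$ in $\mathbb{R}^n$. *)

theory Defs
  imports "HOL-Analysis.Analysis"
begin

end

theory Submission
  imports Defs
begin

text \<open>For (iii), the complement of \<open>S\<close> is connected, and
  every member of \<open>\<U>\<close> meets it, so \<open>\<Union>\<U> = - S \<union> \<Union>\<U>\<close> is connected; as \<open>S\<close> and \<open>\<Union>\<U>\<close> are open,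
  connected and cover \<open>\<real>\<^sup>n\<close>, unicoherence of euclidean space makes \<open>S \<inter> \<Union>\<U>\<close> connected.\<close>

lemma connected_Un_Union_meeting:
  assumes "connected C"
    and "\<And>U. U \<in> \<U> \<Longrightarrow> connected U"
    and "\<And>U. U \<in> \<U> \<Longrightarrow> U \<inter> C \<noteq> {}"
  shows "connected (C \<union> \<Union>\<U>)"
proof (cases "C = {}")
  case True
  then have "\<U> = {}" using assms(3) by blast
  then show ?thesis using True by simp
next
  case False
  let ?\<V> = "insert C ((\<lambda>U. U \<union> C) ` \<U>)"
  have "connected (\<Union>?\<V>)"
  proof (rule connected_Union)
    show "connected V" if "V \<in> ?\<V>" for V
      using that assms connected_Un by blast
    show "\<Inter>?\<V> \<noteq> {}" using False by blast
  qed
  moreover have "\<Union>?\<V> = C \<union> \<Union>\<U>" by blast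
  ultimately show ?thesis by simp
qed

lemma connected_Int_Union_covering_complement:
  fixes S :: "'a::euclidean_space set"
  assumes "open S" "connected S" "connected (- S)"
    and "\<And>U. U \<in> \<U> \<Longrightarrow> open U \<and> connected U"
    and "- S \<subseteq> \<Union>\<U>"
    and "\<And>U. U \<in> \<U> \<Longrightarrow> U \<inter> - S \<noteq> {}"
  shows "connected (S \<inter> \<Union>\<U>)"
proof -
  have "connected (- S \<union> \<Union>\<U>)"
    using connected_Un_Union_meeting[of "- S" \<U>] assms by blast
  moreover have "- S \<union> \<Union>\<U> = \<Union>\<U>" using assms(5) by blast
  ultimately have "connected (\<Union>\<U>)" by simp
  moreover have "open (\<Union>\<U>)" using assms(4) by blast
  moreover have "S \<union> \<Union>\<U> = UNIV" using assms(5) by blast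
  ultimately show ?thesis
    using open_unicoherent_UNIV \<open>open S\<close> \<open>connected S\<close> by blast
qed

theorem proposition2p5:
  fixes S0 S :: "'a::euclidean_space set"
  assumes "closed S0" and "connected S0" and "S \<in> components (- S0)"
  shows "connected (frontier S) \<and> frontier S \<subseteq> S0 \<and>
    (\<forall>\<U>. (\<forall>U\<in>\<U>. open U \<and> connected U) \<and> - S \<subseteq> \<Union>\<U> \<and> (\<forall>U\<in>\<U>. U \<inter> - S \<noteq> {})
       \<longrightarrow> open (S \<inter> \<Union>\<U>) \<and> connected (S \<inter> \<Union>\<U>))"
proof (intro conjI allI impI)
  show "connected (frontier S)"
    using assms connected_frontier_component_complement by blast
  show "frontier S \<subseteq> S0"
    using assms frontier_of_components_closed_complement by blast
  have "open S"
    using assms open_components closed_def by blast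
  fix \<U> :: "'a set set"
  assume \<U>: "(\<forall>U\<in>\<U>. open U \<and> connected U) \<and> - S \<subseteq> \<Union>\<U> \<and> (\<forall>U\<in>\<U>. U \<inter> - S \<noteq> {})"
  show "open (S \<inter> \<Union>\<U>)"
    using \<open>open S\<close> \<U> by blast
  have "connected S" "connected (- S)"
    using assms in_components_connected component_complement_connected by blast+
  then show "connected (S \<inter> \<Union>\<U>)"
    using connected_Int_Union_covering_complement[OF \<open>open S\<close>] \<U> by blast
qed

end
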